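(* Let $J_j(x)=\tfrac{c_j}{2}x^2+\bar c_jx$ with $c_j>0$, and let $\rho>0$. Consider the system in the variables $z=(\hat q,\tilde\theta)\in\mathbb{R}^n\times\mathbb{R}^{|\mathcal E|}$ and $\sigma=(\lambda,\omega,\alpha,\eta)\in\mathbb{R}\times\mathbb{R}^n\times\mathbb{R}^n\times\mathbb{R}^{2|\mathcal E|}$, with $\pi:=\lambda\mathbf 1-H\eta-\omega$ and $q:=\tfrac1\rho(\pi-\alpha)+\hat q$: \[ \dot{\tilde\theta}=C^T\omega,\qquad M\dot\omega=q-d-D\omega-CB\tilde\theta, \] \[ \tau^\alpha_j\dot\alpha_j=q_j-\frac{\pi_j-\bar c_j}{c_j}\ (j=1,\dots,n),\qquad T^{\hat q}\dot{\hat q}=\pi-\alpha, \] \[ T^\lambda\dot\lambda=-\mathbf 1^T(q-d),\qquad T^\eta\dot\eta=\big[H^T(q-d)-F\big]^+_\eta, \] with initial points satisfying $\eta(0)\ge0$. Then a point $(z^*,\sigma^* )$ (with $\eta^*\ge0$) is an equilibrium of this system if and only if, setting $p^*_j:=(\pi^*_j-\bar c_j)/c_j$ with $\pi^*=\lambda^*\mathbf 1-H\eta^*-\omega^*$, $q^*:=\tfrac1\rho(\pi^*-\alpha^* )+\hat q^*$ and $\nu^*:=\omega^*$, the tuple $(p^*,q^*,\omega^*,\tilde\theta^*,\alpha^*,\lambda^*,\eta^*,\nu^* )$ is an optimal primal-dual solution of the planner's problem \[ \min_{p,q,\omega\in\mathbb{R}^n,\,\tilde\theta\in\mathbb{R}^{|\mathcal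 E|}}\ \sum_jJ_j(p_j)+\tfrac12\omega^TD\omega \] subject to $q=p$ (multiplier $\alpha$), $\mathbf 1^T(q-d)=0$ (multiplier $\lambda$), $H^T(q-d)\le F$ (multiplier $\eta\ge0$), $q-d-D\omega-CB\tilde\theta=0$ (multiplier $\nu$).
   Context: $(\mathcal N,\mathcal E)$ is a connected directed graph with $\mathcal N=\{1,\dots,n\}$; $C$ is its incidence matrix ($C_{j,e}=1$ if $e=(j,k)$, $-1$ if $e=(k,j)$, $0$ otherwise). $B$, $D$, $M$ are diagonal with positive diagonal entries; $T^{\hat q},T^\lambda,T^\eta$ are diagonal (or positive scalar) with positive entries, and $\tau^\alpha_j>0$. $L:=CBC^T$, $H\in\mathbb{R}^{n\times2|\mathcal E|}$ with $H^T=\begin{bmatrix} BC^TL^\dagger\\ -BC^TL^\dagger\end{bmatrix}$ ($L^\dagger$ Moore–Penrose inverse), $F=\begin{bmatrix}\overline F\\-\underline F\end{bmatrix}$, $d\in\mathbb{R}^n$ given. Projection: for vectors $y,u$, $([y]^+_u)_e=y_e$ if $y_e>0$ or $u_e>0$, and $0$ otherwise. Optimal primal-dual solutions are with respect to the Lagrangian $\sum_jJ_j(p_j)+\tfrac12\omega^TD\omega+\nu^T(q-d-D\omega-CB\tilde\theta)+\alpha^T(q-p)-\lambda\mathbf 1^T(q-d)+\eta^T(H^T(q-d)-F)$. (The system models linearized swing dynamics, generators' price-bid updates comparing dispatch with their profit-maximizing output at price $\pi$, and regularized market dispatch/pricing with virtual dispatch $\hat q$.) *)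

theory Defs
  imports "HOL-Analysis.Analysis"
begin

definition incidence :: "('e::finite \<Rightarrow> 'n::finite) \<Rightarrow> ('e \<Rightarrow> 'n) \<Rightarrow> real^'e^'n" where
  "incidence src tgt = (\<chi> j e. if j = src e then 1 else if j = tgt e then -1 else 0)"

definition graph_connected :: "('e \<Rightarrow> 'n) \<Rightarrow> ('e \<Rightarrow> 'n) \<Rightarrow> bool" where
  "graph_connected src tgt \<longleftrightarrow>
     (\<forall>i j. (i, j) \<in> ({(src e, tgt e) | e. True} \<union> {(tgt e, src e) | e. True})\<^sup>*)"

definition diag_mat :: "real^'k::finite \<Rightarrow> real^'k^'k" where
  "diag_mat v = (\<chi> i j. if i = j then v $ i else 0)"

definition mp_pinv :: "real^'m::finite^'k::finite \<Rightarrow> real^'k^'m" where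
  "mp_pinv A = (THE X. A ** X ** A = A \<and> X ** A ** X = X \<and>
                      transpose (A ** X) = A ** X \<and> transpose (X ** A) = X ** A)"

definition ones :: "real^'k::finite" where
  "ones = (\<chi> i. 1)"

text \<open>The matrix H^T in R^{2|E| x n}: rows indexed by Inl e are those of B C^T L^dagger,
  rows indexed by Inr e are those of - B C^T L^dagger, where L = C B C^T.\<close>
definition HT_mat :: "('e::finite \<Rightarrow> 'n::finite) \<Rightarrow> ('e \<Rightarrow> 'n) \<Rightarrow> real^'e \<Rightarrow> real^'n^('e + 'e)" where
  "HT_mat src tgt b =
     (let C = incidence src tgt;
          G = diag_mat b ** transpose C ** mp_pinv (C ** diag_mat b ** transpose C)
      in (\<chi> k. case k of Inl e \<Rightarrow> G $ e | Inr e \<Rightarrow> - (G $ e)))"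

definition H_mat :: "('e::finite \<Rightarrow> 'n::finite) \<Rightarrow> ('e \<Rightarrow> 'n) \<Rightarrow> real^'e \<Rightarrow> real^('e + 'e)^'n" where
  "H_mat src tgt b = transpose (HT_mat src tgt b)"

definition F_vec :: "real^'e::finite \<Rightarrow> real^'e \<Rightarrow> real^('e + 'e)" where
  "F_vec Fup Flo = (\<chi> k. case k of Inl e \<Rightarrow> Fup $ e | Inr e \<Rightarrow> - (Flo $ e))"

definition proj_plus :: "real^'k::finite \<Rightarrow> real^'k \<Rightarrow> real^'k" where
  "proj_plus y u = (\<chi> k. if y $ k > 0 \<or> u $ k > 0 then y $ k else 0)"

definition price :: "real^('e::finite + 'e)^'n::finite \<Rightarrow> real \<Rightarrow> real^('e + 'e) \<Rightarrow> real^'n \<Rightarrow> real^'n" where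
  "price H lam eta omega = lam *s ones - H *v eta - omega"

definition dispatch :: "real \<Rightarrow> real^'n::finite \<Rightarrow> real^'n \<Rightarrow> real^'n \<Rightarrow> real^'n" where
  "dispatch rho pr alpha qh = (1 / rho) *s (pr - alpha) + qh"

definition vector_field ::
  "('e::finite \<Rightarrow> 'n::finite) \<Rightarrow> ('e \<Rightarrow> 'n) \<Rightarrow> real^'e \<Rightarrow> real^'n \<Rightarrow> real^'n \<Rightarrow>
   real^'n \<Rightarrow> real^'n \<Rightarrow> real \<Rightarrow> real^('e + 'e) \<Rightarrow>
   real^'n \<Rightarrow> real^'n \<Rightarrow> real^'n \<Rightarrow> real^'e \<Rightarrow> real^'e \<Rightarrow> real \<Rightarrow>
   real^'n \<Rightarrow> real^'e \<Rightarrow> real \<Rightarrow> real^'n \<Rightarrow> real^'n \<Rightarrow> real^('e + 'e) \<Rightarrow>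
   ((real^'e) \<times> (real^'n) \<times> (real^'n) \<times> (real^'n) \<times> real \<times> (real^('e + 'e)))" where
  "vector_field src tgt b dv mv tq ta tlam te c cbar d Fup Flo rho qh theta lam omega alpha eta =
     (let C = incidence src tgt; H = H_mat src tgt b; HT = HT_mat src tgt b;
          F = F_vec Fup Flo;
          pr = price H lam eta omega;
          q = dispatch rho pr alpha qh;
          r = q - d - diag_mat dv *v omega - (C ** diag_mat b) *v theta
      in ( transpose C *v omega,
           (\<chi> j. r $ j / mv $ j),
           (\<chi> j. (q $ j - (pr $ j - cbar $ j) / c $ j) / ta $ j),
           (\<chi> j. (pr - alpha) $ j / tq $ j),
           - (ones \<bullet> (q - d)) / tlam,
           (\<chi> k. proj_plus (HT *v (q - d) - F) eta $ k / te $ k)))"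

definition is_equilibrium where
  "is_equilibrium src tgt b dv mv tq ta tlam te c cbar d Fup Flo rho qh theta lam omega alpha eta \<longleftrightarrow>
     vector_field src tgt b dv mv tq ta tlam te c cbar d Fup Flo rho qh theta lam omega alpha eta
       = (0, 0, 0, 0, 0, 0)"

definition gen_cost :: "real \<Rightarrow> real \<Rightarrow> real \<Rightarrow> real" where
  "gen_cost cj cbarj x = cj / 2 * x^2 + cbarj * x"

definition lagrangian ::
  "('e::finite \<Rightarrow> 'n::finite) \<Rightarrow> ('e \<Rightarrow> 'n) \<Rightarrow> real^'e \<Rightarrow> real^'n \<Rightarrow>
   real^'n \<Rightarrow> real^'n \<Rightarrow> real^'n \<Rightarrow> real^'e \<Rightarrow> real^'e \<Rightarrow>
   real^'n \<Rightarrow> real^'n \<Rightarrow> real^'n \<Rightarrow> real^'e \<Rightarrow>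
   real^'n \<Rightarrow> real \<Rightarrow> real^('e + 'e) \<Rightarrow> real^'n \<Rightarrow> real" where
  "lagrangian src tgt b dv c cbar d Fup Flo p q omega theta alpha lam eta nu =
     (let C = incidence src tgt; HT = HT_mat src tgt b; F = F_vec Fup Flo
      in (\<Sum>j\<in>UNIV. gen_cost (c $ j) (cbar $ j) (p $ j))
         + 1/2 * (omega \<bullet> (diag_mat dv *v omega))
         + nu \<bullet> (q - d - diag_mat dv *v omega - (C ** diag_mat b) *v theta)
         + alpha \<bullet> (q - p)
         - lam * (ones \<bullet> (q - d))
         + eta \<bullet> (HT *v (q - d) - F))"

text \<open>Optimal primal-dual solution: a saddle point of the Lagrangian, with the
  inequality multiplier eta ranging over the nonnegative orthant.\<close>
definition opt_primal_dual where
  "opt_primal_dual src tgt b dv c cbar d Fup Flo p q omega theta alpha lam eta nu \<longleftrightarrow>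
     (\<forall>k. eta $ k \<ge> 0) \<and>
     (\<forall>p' q' omega' theta'.
        lagrangian src tgt b dv c cbar d Fup Flo p q omega theta alpha lam eta nu
        \<le> lagrangian src tgt b dv c cbar d Fup Flo p' q' omega' theta' alpha lam eta nu) \<and>
     (\<forall>alpha' lam' eta' nu'. (\<forall>k. eta' $ k \<ge> 0) \<longrightarrow>
        lagrangian src tgt b dv c cbar d Fup Flo p q omega theta alpha' lam' eta' nu'
        \<le> lagrangian src tgt b dv c cbar d Fup Flo p q omega theta alpha lam eta nu)"

end

theory Submission
  imports Defs
begin

text \<open>Both sides are equivalent to the KKT conditions of the planner's problem. The Lagrangian is
  a sum of strictly convex quadratics in \<open>p\<close> and \<open>\<omega>\<close> and of linear terms in \<open>q\<close> and
  \<open>\<theta>\<close>, so minimality in the primal variables means stationarity: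
  \<open>c\<^sub>j p\<^sub>j + cbar\<^sub>j = \<alpha>\<^sub>j\<close>, \<open>\<omega> = \<nu>\<close>, \<open>\<nu> + \<alpha> - \<lambda>\<one> + H\<eta> = 0\<close> and \<open>BC\<^sup>T\<nu> = 0\<close>.
  It is affine in the multipliers, so maximality over \<open>\<eta> \<ge> 0\<close> and the free multipliers means
  primal feasibility and complementary slackness. For \<open>\<nu> = \<omega>\<close>, stationarity in \<open>q\<close> is
  \<open>\<pi> = \<alpha>\<close>, the rest condition of the \<open>q\<close>-hat dynamics, and the other right-hand sides of
  the dynamics vanish exactly when the remaining conditions hold.\<close>

lemma inner_matrix_vector_mult: "(x::real^'m::finite) \<bullet> (A *v y) = (transpose A *v x) \<bullet> y"
  by (simp add: dot_lmul_matrix)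

lemma diag_mat_mult_vector: "diag_mat v *v x = (\<chi> i. v $ i * x $ i)"
proof -
  have "(\<Sum>j\<in>UNIV. (if i = j then v $ i else 0) * x $ j) = v $ i * x $ i" for i
    by (simp add: if_distrib[of "\<lambda>t. t * _"] cong: if_cong)
  then show ?thesis
    unfolding diag_mat_def matrix_vector_mult_def by (simp add: vec_eq_iff)
qed

lemma transpose_diag_mat [simp]: "transpose (diag_mat v) = diag_mat v"
  by (simp add: diag_mat_def transpose_def vec_eq_iff)

lemma inner_diag_mat: "(u::real^'n::finite) \<bullet> (diag_mat v *v x) = (\<Sum>i\<in>UNIV. u $ i * v $ i * x $ i)"
  by (simp add: diag_mat_mult_vector inner_vec_def mult.assoc)

lemma diag_mat_mult_vector_eq_0_iff:
  assumes "\<forall>i. k $ i \<noteq> 0"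
  shows "diag_mat k *v v = 0 \<longleftrightarrow> v = 0"
  using assms by (auto simp: diag_mat_mult_vector vec_eq_iff)

lemma inner_min_iff:
  fixes a x :: "'a::real_inner"
  shows "(\<forall>y. a \<bullet> x \<le> a \<bullet> y) \<longleftrightarrow> a = 0"
proof
  assume "\<forall>y. a \<bullet> x \<le> a \<bullet> y"
  then have "a \<bullet> x \<le> a \<bullet> (x - a)" ..
  then have "a \<bullet> a \<le> 0"
    by (simp add: inner_diff_right)
  then show "a = 0"
    by (metis inner_gt_zero_iff not_le)
qed simp

lemma inner_max_iff:
  fixes a x :: "'a::real_inner"
  shows "(\<forall>y. a \<bullet> y \<le> a \<bullet> x) \<longleftrightarrow> a = 0"
  using inner_min_iff[of "- a" x] by simp

lemma nonneg_orthant_inner_max_iff: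
  fixes u y :: "real^'k::finite"
  assumes u_nonneg: "\<forall>k. 0 \<le> u $ k"
  shows "(\<forall>u'. (\<forall>k. 0 \<le> u' $ k) \<longrightarrow> u' \<bullet> y \<le> u \<bullet> y)
    \<longleftrightarrow> (\<forall>k. y $ k \<le> 0 \<and> u $ k * y $ k = 0)"
proof
  assume max: "\<forall>u'. (\<forall>k. 0 \<le> u' $ k) \<longrightarrow> u' \<bullet> y \<le> u \<bullet> y"
  show "\<forall>k. y $ k \<le> 0 \<and> u $ k * y $ k = 0"
  proof
    fix k
    have "(u + axis k 1) \<bullet> y \<le> u \<bullet> y"
      using max u_nonneg by (simp add: axis_def)
    then have y_nonpos: "y $ k \<le> 0"
      by (simp add: inner_add_left inner_axis')
    have "(u - axis k (u $ k)) \<bullet> y \<le> u \<bullet> y"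
      using max u_nonneg by (simp add: axis_def)
    then have "0 \<le> u $ k * y $ k"
      by (simp add: inner_diff_left inner_axis')
    with y_nonpos u_nonneg show "y $ k \<le> 0 \<and> u $ k * y $ k = 0"
      by (metis antisym mult_nonneg_nonpos)
  qed
next
  assume slack: "\<forall>k. y $ k \<le> 0 \<and> u $ k * y $ k = 0"
  have "u' \<bullet> y \<le> 0" if "\<forall>k. 0 \<le> u' $ k" for u'
    unfolding inner_vec_def using that slack by (simp add: mult_nonneg_nonpos sum_nonpos)
  moreover have "u \<bullet> y = 0"
    unfolding inner_vec_def using slack by (intro sum.neutral) simp
  ultimately show "\<forall>u'. (\<forall>k. 0 \<le> u' $ k) \<longrightarrow> u' \<bullet> y \<le> u \<bullet> y"
    by simp
qed

lemma min_at_iff_eq_center: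
  fixes f Q :: "'a::ab_group_add \<Rightarrow> real"
  assumes expand: "\<And>y. f y = f x0 + Q (y - x0)"
    and nonneg: "\<And>v. 0 \<le> Q v"
    and definite: "\<And>v. Q v \<le> 0 \<Longrightarrow> v = 0"
  shows "(\<forall>y. f x \<le> f y) \<longleftrightarrow> x = x0"
proof
  assume "\<forall>y. f x \<le> f y"
  then have "f x \<le> f x0" ..
  then have "Q (x - x0) \<le> 0"
    by (simp add: expand[of x])
  then show "x = x0"
    using definite by fastforce
next
  assume "x = x0"
  have "f x0 \<le> f y" for y
    using expand[of y] nonneg[of "y - x0"] by linarith
  with \<open>x = x0\<close> show "\<forall>y. f x \<le> f y"
    by simp
qed

lemma separable_quadratic_min_iff:
  fixes k m x :: "real^'n::finite"
  assumes k_pos: "\<forall>i. 0 < k $ i"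
  shows "(\<forall>y. (\<Sum>i\<in>UNIV. k $ i / 2 * (x $ i)\<^sup>2 - m $ i * x $ i)
             \<le> (\<Sum>i\<in>UNIV. k $ i / 2 * (y $ i)\<^sup>2 - m $ i * y $ i))
    \<longleftrightarrow> (\<forall>i. k $ i * x $ i = m $ i)"
proof -
  define f where "f y = (\<Sum>i\<in>UNIV. k $ i / 2 * (y $ i)\<^sup>2 - m $ i * y $ i)" for y :: "real^'n"
  define Q where "Q v = (\<Sum>i\<in>UNIV. k $ i / 2 * (v $ i)\<^sup>2)" for v :: "real^'n"
  define x0 :: "real^'n" where "x0 = (\<chi> i. m $ i / k $ i)"
  have k_nonzero: "k $ i \<noteq> 0" for i
    using k_pos by (metis less_irrefl)
  have "f y = f x0 + Q (y - x0)" for y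
    unfolding f_def Q_def sum.distrib[symmetric]
    by (intro sum.cong) (simp_all add: x0_def k_nonzero field_simps power2_eq_square)
  moreover have Q_nonneg: "0 \<le> Q v" for v
    using k_pos by (auto simp: Q_def less_imp_le intro!: sum_nonneg)
  moreover have "v = 0" if "Q v \<le> 0" for v
  proof -
    have "Q v = 0" using that Q_nonneg by (simp add: antisym)
    then have "\<forall>i. k $ i / 2 * (v $ i)\<^sup>2 = 0"
      using k_pos unfolding Q_def by (subst (asm) sum_nonneg_eq_0_iff) (auto simp: less_imp_le)
    then show "v = 0"
      using k_nonzero by (simp add: vec_eq_iff)
  qed
  ultimately have "(\<forall>y. f x \<le> f y) \<longleftrightarrow> x = x0"
    by (rule min_at_iff_eq_center)
  also have "\<dots> \<longleftrightarrow> (\<forall>i. k $ i * x $ i = m $ i)"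
    by (auto simp: x0_def vec_eq_iff k_nonzero field_simps)
  finally show ?thesis
    unfolding f_def .
qed

lemma separable_min_iff:
  fixes f1 :: "'a \<Rightarrow> 'r::ordered_ab_group_add" and f2 :: "'b \<Rightarrow> 'r"
    and f3 :: "'c \<Rightarrow> 'r" and f4 :: "'d \<Rightarrow> 'r"
  assumes "a1 \<in> A1" "a2 \<in> A2" "a3 \<in> A3" "a4 \<in> A4"
  shows "(\<forall>x1\<in>A1. \<forall>x2\<in>A2. \<forall>x3\<in>A3. \<forall>x4\<in>A4.
            f1 a1 + f2 a2 + f3 a3 + f4 a4 \<le> f1 x1 + f2 x2 + f3 x3 + f4 x4)
    \<longleftrightarrow> (\<forall>x\<in>A1. f1 a1 \<le> f1 x) \<and> (\<forall>x\<in>A2. f2 a2 \<le> f2 x)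
      \<and> (\<forall>x\<in>A3. f3 a3 \<le> f3 x) \<and> (\<forall>x\<in>A4. f4 a4 \<le> f4 x)"
proof
  assume min: "\<forall>x1\<in>A1. \<forall>x2\<in>A2. \<forall>x3\<in>A3. \<forall>x4\<in>A4.
            f1 a1 + f2 a2 + f3 a3 + f4 a4 \<le> f1 x1 + f2 x2 + f3 x3 + f4 x4"
  show "(\<forall>x\<in>A1. f1 a1 \<le> f1 x) \<and> (\<forall>x\<in>A2. f2 a2 \<le> f2 x)
      \<and> (\<forall>x\<in>A3. f3 a3 \<le> f3 x) \<and> (\<forall>x\<in>A4. f4 a4 \<le> f4 x)"
    using min[rule_format, of _ a2 a3 a4] min[rule_format, of a1 _ a3 a4]
      min[rule_format, of a1 a2 _ a4] min[rule_format, of a1 a2 a3] assms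
    by simp
qed (auto intro!: add_mono)

lemma separable_max_iff:
  fixes f1 :: "'a \<Rightarrow> 'r::ordered_ab_group_add" and f2 :: "'b \<Rightarrow> 'r"
    and f3 :: "'c \<Rightarrow> 'r" and f4 :: "'d \<Rightarrow> 'r"
  assumes "a1 \<in> A1" "a2 \<in> A2" "a3 \<in> A3" "a4 \<in> A4"
  shows "(\<forall>x1\<in>A1. \<forall>x2\<in>A2. \<forall>x3\<in>A3. \<forall>x4\<in>A4.
            f1 x1 + f2 x2 + f3 x3 + f4 x4 \<le> f1 a1 + f2 a2 + f3 a3 + f4 a4)
    \<longleftrightarrow> (\<forall>x\<in>A1. f1 x \<le> f1 a1) \<and> (\<forall>x\<in>A2. f2 x \<le> f2 a2)
      \<and> (\<forall>x\<in>A3. f3 x \<le> f3 a3) \<and> (\<forall>x\<in>A4. f4 x \<le> f4 a4)"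
proof
  assume max: "\<forall>x1\<in>A1. \<forall>x2\<in>A2. \<forall>x3\<in>A3. \<forall>x4\<in>A4.
            f1 x1 + f2 x2 + f3 x3 + f4 x4 \<le> f1 a1 + f2 a2 + f3 a3 + f4 a4"
  show "(\<forall>x\<in>A1. f1 x \<le> f1 a1) \<and> (\<forall>x\<in>A2. f2 x \<le> f2 a2)
      \<and> (\<forall>x\<in>A3. f3 x \<le> f3 a3) \<and> (\<forall>x\<in>A4. f4 x \<le> f4 a4)"
    using max[rule_format, of _ a2 a3 a4] max[rule_format, of a1 _ a3 a4]
      max[rule_format, of a1 a2 _ a4] max[rule_format, of a1 a2 a3] assms
    by simp
qed (auto intro!: add_mono)

lemma lagrangian_primal_form:
  fixes src tgt :: "'e::finite \<Rightarrow> 'n::finite"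
  shows "lagrangian src tgt b dv c cbar d Fup Flo p q omega theta alpha lam eta nu =
      (\<Sum>j\<in>UNIV. c $ j / 2 * (p $ j)\<^sup>2 - (alpha $ j - cbar $ j) * p $ j)
    + (\<Sum>j\<in>UNIV. dv $ j / 2 * (omega $ j)\<^sup>2 - dv $ j * nu $ j * omega $ j)
    + (nu + alpha - lam *s ones + transpose (HT_mat src tgt b) *v eta) \<bullet> q
    + (- (diag_mat b *v (transpose (incidence src tgt) *v nu))) \<bullet> theta
    - (nu \<bullet> d - lam * (ones \<bullet> d) + eta \<bullet> (HT_mat src tgt b *v d + F_vec Fup Flo))"
proof -
  define C where "C = incidence src tgt"
  define HT where "HT = HT_mat src tgt b"
  have network: "nu \<bullet> ((C ** diag_mat b) *v theta) = (diag_mat b *v (transpose C *v nu)) \<bullet> theta"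
    by (simp add: inner_matrix_vector_mult matrix_transpose_mul flip: matrix_vector_mul_assoc)
  have market: "eta \<bullet> (HT *v q) = (transpose HT *v eta) \<bullet> q"
    by (rule inner_matrix_vector_mult)
  have cost: "(\<Sum>j\<in>UNIV. gen_cost (c $ j) (cbar $ j) (p $ j)) - alpha \<bullet> p
      = (\<Sum>j\<in>UNIV. c $ j / 2 * (p $ j)\<^sup>2 - (alpha $ j - cbar $ j) * p $ j)"
    by (simp add: gen_cost_def inner_vec_def sum_subtractf[symmetric] algebra_simps)
  have frequency: "1/2 * (omega \<bullet> (diag_mat dv *v omega)) - nu \<bullet> (diag_mat dv *v omega)
      = (\<Sum>j\<in>UNIV. dv $ j / 2 * (omega $ j)\<^sup>2 - dv $ j * nu $ j * omega $ j)"
    by (simp add: inner_diag_mat sum_distrib_left sum_subtractf[symmetric] power2_eq_square algebra_simps)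
  have price: "(nu + alpha - lam *s ones + transpose HT *v eta) \<bullet> q
      = nu \<bullet> q + alpha \<bullet> q - lam * (ones \<bullet> q) + eta \<bullet> (HT *v q)"
    by (simp add: market inner_add_left inner_diff_left scalar_mult_eq_scaleR)
  have "lagrangian src tgt b dv c cbar d Fup Flo p q omega theta alpha lam eta nu
      = ((\<Sum>j\<in>UNIV. gen_cost (c $ j) (cbar $ j) (p $ j)) - alpha \<bullet> p)
      + (1/2 * (omega \<bullet> (diag_mat dv *v omega)) - nu \<bullet> (diag_mat dv *v omega))
      + (nu \<bullet> q + alpha \<bullet> q - lam * (ones \<bullet> q) + eta \<bullet> (HT *v q))
      - nu \<bullet> ((C ** diag_mat b) *v theta)
      - (nu \<bullet> d - lam * (ones \<bullet> d) + eta \<bullet> (HT *v d + F_vec Fup Flo))"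
    unfolding lagrangian_def Let_def C_def[symmetric] HT_def[symmetric]
    by (simp add: inner_diff_right inner_add_right matrix_vector_mult_diff_distrib algebra_simps)
  also have "\<dots> =
      (\<Sum>j\<in>UNIV. c $ j / 2 * (p $ j)\<^sup>2 - (alpha $ j - cbar $ j) * p $ j)
    + (\<Sum>j\<in>UNIV. dv $ j / 2 * (omega $ j)\<^sup>2 - dv $ j * nu $ j * omega $ j)
    + (nu + alpha - lam *s ones + transpose HT *v eta) \<bullet> q
    + (- (diag_mat b *v (transpose C *v nu))) \<bullet> theta
    - (nu \<bullet> d - lam * (ones \<bullet> d) + eta \<bullet> (HT *v d + F_vec Fup Flo))"
    unfolding cost frequency price network by simp
  finally show ?thesis
    unfolding C_def HT_def .
qed

lemma lagrangian_primal_min_iff: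
  fixes src tgt :: "'e::finite \<Rightarrow> 'n::finite"
  assumes c_pos: "\<forall>j. 0 < c $ j" and dv_pos: "\<forall>j. 0 < dv $ j" and b_pos: "\<forall>e. 0 < b $ e"
  shows "(\<forall>p' q' omega' theta'.
            lagrangian src tgt b dv c cbar d Fup Flo p q omega theta alpha lam eta nu
            \<le> lagrangian src tgt b dv c cbar d Fup Flo p' q' omega' theta' alpha lam eta nu)
    \<longleftrightarrow> (\<forall>j. c $ j * p $ j + cbar $ j = alpha $ j) \<and> omega = nu
      \<and> nu + alpha - lam *s ones + transpose (HT_mat src tgt b) *v eta = 0
      \<and> transpose (incidence src tgt) *v nu = 0"
proof -
  define P where "P p' = (\<Sum>j\<in>UNIV. c $ j / 2 * (p' $ j)\<^sup>2 - (alpha $ j - cbar $ j) * p' $ j)"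
    for p' :: "real^'n"
  define W where "W omega' = (\<Sum>j\<in>UNIV. dv $ j / 2 * (omega' $ j)\<^sup>2 - dv $ j * nu $ j * omega' $ j)"
    for omega' :: "real^'n"
  define g where "g = nu + alpha - lam *s ones + transpose (HT_mat src tgt b) *v eta"
  define w where "w = diag_mat b *v (transpose (incidence src tgt) *v nu)"
  define K where "K = nu \<bullet> d - lam * (ones \<bullet> d) + eta \<bullet> (HT_mat src tgt b *v d + F_vec Fup Flo)"
  have form: "lagrangian src tgt b dv c cbar d Fup Flo p' q' omega' theta' alpha lam eta nu
      = P p' + g \<bullet> q' + W omega' + ((- w) \<bullet> theta' - K)" for p' q' omega' theta'
    unfolding lagrangian_primal_form P_def W_def g_def w_def K_def by simp
  have "(\<forall>p' q' omega' theta'.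
            lagrangian src tgt b dv c cbar d Fup Flo p q omega theta alpha lam eta nu
            \<le> lagrangian src tgt b dv c cbar d Fup Flo p' q' omega' theta' alpha lam eta nu)
    \<longleftrightarrow> (\<forall>p'. P p \<le> P p') \<and> (\<forall>q'. g \<bullet> q \<le> g \<bullet> q')
      \<and> (\<forall>omega'. W omega \<le> W omega') \<and> (\<forall>theta'. (- w) \<bullet> theta \<le> (- w) \<bullet> theta')"
    unfolding form
    using separable_min_iff[OF UNIV_I UNIV_I UNIV_I UNIV_I, unfolded ball_UNIV,
        of P p "\<lambda>q'. g \<bullet> q'" q W omega "\<lambda>theta'. (- w) \<bullet> theta' - K" theta]
    by simp
  also have "\<dots> \<longleftrightarrow> (\<forall>j. c $ j * p $ j + cbar $ j = alpha $ j) \<and> g = 0 \<and> omega = nu \<and> w = 0"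
  proof -
    have "(\<forall>p'. P p \<le> P p') \<longleftrightarrow> (\<forall>j. c $ j * p $ j = alpha $ j - cbar $ j)"
      unfolding P_def using separable_quadratic_min_iff[OF c_pos, of p "\<chi> j. alpha $ j - cbar $ j"]
      by simp
    moreover have "(\<forall>omega'. W omega \<le> W omega') \<longleftrightarrow> (\<forall>j. dv $ j * omega $ j = dv $ j * nu $ j)"
      unfolding W_def using separable_quadratic_min_iff[OF dv_pos, of omega "\<chi> j. dv $ j * nu $ j"]
      by simp
    moreover have "(\<forall>j. dv $ j * omega $ j = dv $ j * nu $ j) \<longleftrightarrow> omega = nu"
      using dv_pos by (auto simp: vec_eq_iff) (metis less_irrefl)
    ultimately show ?thesis
      unfolding inner_min_iff neg_equal_0_iff_equal by (auto simp: algebra_simps)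
  qed
  also have "w = 0 \<longleftrightarrow> transpose (incidence src tgt) *v nu = 0"
    unfolding w_def using b_pos by (intro diag_mat_mult_vector_eq_0_iff) (metis less_irrefl)
  finally show ?thesis
    unfolding g_def by blast
qed

lemma lagrangian_dual_max_iff:
  fixes src tgt :: "'e::finite \<Rightarrow> 'n::finite"
  assumes eta_nonneg: "\<forall>k. 0 \<le> eta $ k"
  shows "(\<forall>alpha' lam' eta' nu'. (\<forall>k. 0 \<le> eta' $ k) \<longrightarrow>
            lagrangian src tgt b dv c cbar d Fup Flo p q omega theta alpha' lam' eta' nu'
            \<le> lagrangian src tgt b dv c cbar d Fup Flo p q omega theta alpha lam eta nu)
    \<longleftrightarrow> q = p \<and> ones \<bullet> (q - d) = 0
      \<and> (\<forall>k. (HT_mat src tgt b *v (q - d) - F_vec Fup Flo) $ k \<le> 0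
             \<and> eta $ k * (HT_mat src tgt b *v (q - d) - F_vec Fup Flo) $ k = 0)
      \<and> q - d - diag_mat dv *v omega - (incidence src tgt ** diag_mat b) *v theta = 0"
proof -
  define y where "y = HT_mat src tgt b *v (q - d) - F_vec Fup Flo"
  define r where "r = q - d - diag_mat dv *v omega - (incidence src tgt ** diag_mat b) *v theta"
  define K where
    "K = (\<Sum>j\<in>UNIV. gen_cost (c $ j) (cbar $ j) (p $ j)) + 1/2 * (omega \<bullet> (diag_mat dv *v omega))"
  have form: "lagrangian src tgt b dv c cbar d Fup Flo p q omega theta alpha' lam' eta' nu'
      = (q - p) \<bullet> alpha' + (- (ones \<bullet> (q - d))) \<bullet> lam' + eta' \<bullet> y + (r \<bullet> nu' + K)"
    for alpha' lam' eta' nu'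
    unfolding lagrangian_def Let_def y_def r_def K_def by (simp add: inner_commute algebra_simps)
  have "(\<forall>alpha' lam' eta' nu'. (\<forall>k. 0 \<le> eta' $ k) \<longrightarrow>
            lagrangian src tgt b dv c cbar d Fup Flo p q omega theta alpha' lam' eta' nu'
            \<le> lagrangian src tgt b dv c cbar d Fup Flo p q omega theta alpha lam eta nu)
    \<longleftrightarrow> (\<forall>alpha'. (q - p) \<bullet> alpha' \<le> (q - p) \<bullet> alpha)
      \<and> (\<forall>lam'. (- (ones \<bullet> (q - d))) \<bullet> lam' \<le> (- (ones \<bullet> (q - d))) \<bullet> lam)
      \<and> (\<forall>eta'. (\<forall>k. 0 \<le> eta' $ k) \<longrightarrow> eta' \<bullet> y \<le> eta \<bullet> y)
      \<and> (\<forall>nu'. r \<bullet> nu' + K \<le> r \<bullet> nu + K)"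
    unfolding form
    using separable_max_iff[of alpha UNIV lam UNIV eta "{u. \<forall>k. 0 \<le> u $ k}" nu UNIV
        "\<lambda>alpha'. (q - p) \<bullet> alpha'" "\<lambda>lam'. (- (ones \<bullet> (q - d))) \<bullet> lam'"
        "\<lambda>eta'. eta' \<bullet> y" "\<lambda>nu'. r \<bullet> nu' + K"] eta_nonneg
    by simp
  also have "\<dots> \<longleftrightarrow> q - p = 0 \<and> - (ones \<bullet> (q - d)) = 0
      \<and> (\<forall>k. y $ k \<le> 0 \<and> eta $ k * y $ k = 0) \<and> r = 0"
    unfolding inner_max_iff nonneg_orthant_inner_max_iff[OF eta_nonneg] add_le_cancel_right ..
  finally show ?thesis
    unfolding y_def r_def by simp
qed

definition kkt_conditions ::
  "('e::finite \<Rightarrow> 'n::finite) \<Rightarrow> ('e \<Rightarrow> 'n) \<Rightarrow> real^'e \<Rightarrow> real^'n \<Rightarrow>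
   real^'n \<Rightarrow> real^'n \<Rightarrow> real^'n \<Rightarrow> real^'e \<Rightarrow> real^'e \<Rightarrow>
   real^'n \<Rightarrow> real^'n \<Rightarrow> real^'n \<Rightarrow> real^'e \<Rightarrow>
   real^'n \<Rightarrow> real \<Rightarrow> real^('e + 'e) \<Rightarrow> real^'n \<Rightarrow> bool" where
  "kkt_conditions src tgt b dv c cbar d Fup Flo p q omega theta alpha lam eta nu \<longleftrightarrow>
     (let C = incidence src tgt; HT = HT_mat src tgt b; y = HT *v (q - d) - F_vec Fup Flo
      in (\<forall>j. c $ j * p $ j + cbar $ j = alpha $ j) \<and> omega = nu
         \<and> nu + alpha - lam *s ones + transpose HT *v eta = 0 \<and> transpose C *v nu = 0
         \<and> q = p \<and> ones \<bullet> (q - d) = 0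
         \<and> q - d - diag_mat dv *v omega - (C ** diag_mat b) *v theta = 0
         \<and> (\<forall>k. 0 \<le> eta $ k \<and> y $ k \<le> 0 \<and> eta $ k * y $ k = 0))"

lemma opt_primal_dual_iff_kkt_conditions:
  fixes src tgt :: "'e::finite \<Rightarrow> 'n::finite"
  assumes "\<forall>j. 0 < c $ j" and "\<forall>j. 0 < dv $ j" and "\<forall>e. 0 < b $ e"
  shows "opt_primal_dual src tgt b dv c cbar d Fup Flo p q omega theta alpha lam eta nu
    \<longleftrightarrow> kkt_conditions src tgt b dv c cbar d Fup Flo p q omega theta alpha lam eta nu"
proof (cases "\<forall>k. 0 \<le> eta $ k")
  case True
  then show ?thesis
    unfolding opt_primal_dual_def kkt_conditions_def Let_def
      lagrangian_primal_min_iff[OF assms, of src tgt cbar d Fup Flo p q omega theta alpha lam eta nu]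
      lagrangian_dual_max_iff[OF True, of src tgt b dv c cbar d Fup Flo p q omega theta alpha lam nu]
    by auto
qed (auto simp: opt_primal_dual_def kkt_conditions_def Let_def)

lemma vec_divide_eq_0_iff:
  assumes "\<forall>j. t $ j \<noteq> (0::real)"
  shows "(\<chi> j. f j / t $ j) = 0 \<longleftrightarrow> (\<forall>j. f j = 0)"
  using assms by (simp add: vec_eq_iff)

lemma proj_plus_nth_eq_0_iff:
  assumes "0 \<le> u $ k"
  shows "proj_plus y u $ k = 0 \<longleftrightarrow> y $ k \<le> 0 \<and> u $ k * y $ k = 0"
  using assms unfolding proj_plus_def by auto

lemma is_equilibrium_iff_kkt_conditions:
  fixes src tgt :: "'e::finite \<Rightarrow> 'n::finite"
  assumes mv_pos: "\<forall>j. mv $ j > 0" and tq_pos: "\<forall>j. tq $ j > 0" and ta_pos: "\<forall>j. ta $ j > 0"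
    and tl_pos: "tlam > 0" and te_pos: "\<forall>k. te $ k > 0" and c_pos: "\<forall>j. c $ j > 0"
    and eta_nonneg: "\<forall>k. eta $ k \<ge> 0"
  shows "is_equilibrium src tgt b dv mv tq ta tlam te c cbar d Fup Flo rho qh theta lam omega alpha eta
    \<longleftrightarrow>
     (let pr = price (H_mat src tgt b) lam eta omega;
          p = (\<chi> j. (pr $ j - cbar $ j) / c $ j);
          q = dispatch rho pr alpha qh
      in kkt_conditions src tgt b dv c cbar d Fup Flo p q omega theta alpha lam eta omega)"
proof -
  define C where "C = incidence src tgt"
  define HT where "HT = HT_mat src tgt b"
  define pr where "pr = price (H_mat src tgt b) lam eta omega"
  define p where "p = (\<chi> j. (pr $ j - cbar $ j) / c $ j)"
  define q where "q = dispatch rho pr alpha qh"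
  define r where "r = q - d - diag_mat dv *v omega - (C ** diag_mat b) *v theta"
  define y where "y = HT *v (q - d) - F_vec Fup Flo"
  have nonzero: "\<forall>j. mv $ j \<noteq> 0" "\<forall>j. tq $ j \<noteq> 0" "\<forall>j. ta $ j \<noteq> 0" "\<forall>k. te $ k \<noteq> 0"
    using mv_pos tq_pos ta_pos te_pos by (metis less_irrefl)+
  have "is_equilibrium src tgt b dv mv tq ta tlam te c cbar d Fup Flo rho qh theta lam omega alpha eta
    \<longleftrightarrow> transpose C *v omega = 0 \<and> r = 0 \<and> q = p \<and> pr = alpha \<and> ones \<bullet> (q - d) = 0
      \<and> (\<forall>k. y $ k \<le> 0 \<and> eta $ k * y $ k = 0)"
    unfolding is_equilibrium_def vector_field_def Let_def zero_prod_def
    unfolding C_def[symmetric] HT_def[symmetric] pr_def[symmetric] q_def[symmetric]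
      r_def[symmetric] y_def[symmetric]
    using tl_pos
    by (simp add: vec_divide_eq_0_iff nonzero proj_plus_nth_eq_0_iff eta_nonneg vec_eq_iff p_def)
  also have "\<dots> \<longleftrightarrow> kkt_conditions src tgt b dv c cbar d Fup Flo p q omega theta alpha lam eta omega"
  proof -
    have "omega + alpha - lam *s ones + transpose HT *v eta = alpha - pr"
      unfolding pr_def price_def H_mat_def HT_def by (simp add: algebra_simps)
    then have q_stationarity: "omega + alpha - lam *s ones + transpose HT *v eta = 0 \<longleftrightarrow> pr = alpha"
      by (metis right_minus_eq)
    have "c $ j * p $ j + cbar $ j = pr $ j" for j
      using c_pos by (simp add: p_def less_imp_neq[symmetric])
    then show ?thesis
      unfolding kkt_conditions_def Let_def C_def[symmetric] HT_def[symmetric] r_def[symmetric]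
        y_def[symmetric] q_stationarity
      using eta_nonneg by auto
  qed
  finally show ?thesis
    unfolding pr_def p_def q_def Let_def .
qed

theorem theorem4:
  fixes src tgt :: "'e::finite \<Rightarrow> 'n::finite"
    and b :: "real^'e" and dv mv tq ta :: "real^'n" and tlam :: real and te :: "real^('e + 'e)"
    and c cbar d :: "real^'n" and Fup Flo :: "real^'e" and rho :: real
    and qh :: "real^'n" and theta :: "real^'e" and lam :: real
    and omega alpha :: "real^'n" and eta :: "real^('e + 'e)"
  assumes no_loops: "\<forall>e. src e \<noteq> tgt e"
    and conn: "graph_connected src tgt"
    and b_pos: "\<forall>e. b $ e > 0"
    and dv_pos: "\<forall>j. dv $ j > 0" and mv_pos: "\<forall>j. mv $ j > 0"
    and tq_pos: "\<forall>j. tq $ j > 0" and ta_pos: "\<forall>j. ta $ j > 0"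
    and tl_pos: "tlam > 0" and te_pos: "\<forall>k. te $ k > 0"
    and c_pos: "\<forall>j. c $ j > 0" and rho_pos: "rho > 0"
    and eta_nonneg: "\<forall>k. eta $ k \<ge> 0"
  shows "is_equilibrium src tgt b dv mv tq ta tlam te c cbar d Fup Flo rho qh theta lam omega alpha eta
     \<longleftrightarrow>
     (let pr = price (H_mat src tgt b) lam eta omega;
          p = (\<chi> j. (pr $ j - cbar $ j) / c $ j);
          q = dispatch rho pr alpha qh
      in opt_primal_dual src tgt b dv c cbar d Fup Flo p q omega theta alpha lam eta omega)"
proof -
  show ?thesis
    unfolding opt_primal_dual_iff_kkt_conditions[OF c_pos dv_pos b_pos]
    by (rule is_equilibrium_iff_kkt_conditions[OF mv_pos tq_pos ta_pos tl_pos te_pos c_pos eta_nonneg])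
qed

end
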